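(* For all positive integers $m$ and $k$, \[ \sigma_k(m)=\tau_k(m+1)-\tau_{k-1}(m). \]
   Context: $f_\lambda$ denotes the number of standard Young tableaux of shape $\lambda$, $l(\lambda)$ the number of parts and $d_\lambda$ the number of distinct parts of a partition $\lambda$. For integers $k\ge 0$, $n\ge 1$: $\tau_k(n)=\sum_{\lambda\vdash n,\ l(\lambda)\le k} f_\lambda$ (so $\tau_0(n)=0$) and $\sigma_k(n)=\sum_{\lambda\vdash n,\ l(\lambda)\le k} d_\lambda f_\lambda$. *)

theory Defs
  imports Main
begin

definition is_partition :: "nat \<Rightarrow> nat list \<Rightarrow> bool" where
  "is_partition n lam \<longleftrightarrow> sorted_wrt (\<ge>) lam \<and> (\<forall>x\<in>set lam. 0 < x) \<and> sum_list lam = n"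

definition cells :: "nat list \<Rightarrow> (nat \<times> nat) set" where
  "cells lam = {(i, j). i < length lam \<and> j < lam ! i}"

definition SYT :: "nat list \<Rightarrow> (nat \<times> nat \<Rightarrow> nat) set" where
  "SYT lam = {T. bij_betw T (cells lam) {1..sum_list lam}
              \<and> (\<forall>c. c \<notin> cells lam \<longrightarrow> T c = 0)
              \<and> (\<forall>i j. (i, Suc j) \<in> cells lam \<longrightarrow> T (i, j) < T (i, Suc j))
              \<and> (\<forall>i j. (Suc i, j) \<in> cells lam \<longrightarrow> T (i, j) < T (Suc i, j))}"

definition f_syt :: "nat list \<Rightarrow> nat" where
  "f_syt lam = card (SYT lam)"

definition d_parts :: "nat list \<Rightarrow> nat" where
  "d_parts lam = card (set lam)"

definition tau :: "nat \<Rightarrow> nat \<Rightarrow> nat" where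
  "tau k n = (\<Sum>lam\<in>{lam. is_partition n lam \<and> length lam \<le> k}. f_syt lam)"

definition sigma :: "nat \<Rightarrow> nat \<Rightarrow> nat" where
  "sigma k n = (\<Sum>lam\<in>{lam. is_partition n lam \<and> length lam \<le> k}. d_parts lam * f_syt lam)"

end

theory Submission
  imports Defs "HOL-Library.FuncSet"
begin

text \<open>The largest entry of a standard tableau lies in a corner of its shape, and deleting it
  leaves a standard tableau of the shape with that corner removed. This gives the branching rule:
  \<open>f\<close> of \<open>\<lambda>\<close> is the sum of \<open>f\<close> of \<open>\<lambda> - c\<close> over the corners \<open>c\<close> of \<open>\<lambda>\<close>. Summing it over the
  partitions \<open>\<lambda>\<close> of \<open>m + 1\<close> with at most \<open>k\<close> rows, a pair \<open>(\<lambda>, c)\<close> is the same as a partition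
  \<open>\<mu> = \<lambda> - c\<close> of \<open>m\<close> together with a cell that can be added to \<open>\<mu>\<close> without creating more than \<open>k\<close>
  rows. Such a cell ends the top row of one of the \<open>d\<^sub>\<mu>\<close> blocks of equal parts of \<open>\<mu>\<close>, or it starts a
  new row, which is possible exactly when \<open>l(\<mu>) < k\<close>. Hence
  \<open>\<tau>\<^sub>k(m + 1) = \<sigma>\<^sub>k(m) + \<tau>\<^sub>k\<^sub>-\<^sub>1(m)\<close>.\<close>

section \<open>Standard tableaux on arbitrary sets of cells\<close>

text \<open>\<open>SYT\<close> generalised from Young diagrams to arbitrary cell sets, so that deleting a corner
  stays inside the class.\<close>

definition syt :: "(nat \<times> nat) set \<Rightarrow> (nat \<times> nat \<Rightarrow> nat) set" where
  "syt D = {T. bij_betw T D {1..card D}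
              \<and> (\<forall>c. c \<notin> D \<longrightarrow> T c = 0)
              \<and> (\<forall>i j. (i, Suc j) \<in> D \<longrightarrow> T (i, j) < T (i, Suc j))
              \<and> (\<forall>i j. (Suc i, j) \<in> D \<longrightarrow> T (i, j) < T (Suc i, j))}"

definition corners :: "(nat \<times> nat) set \<Rightarrow> (nat \<times> nat) set" where
  "corners D = {c \<in> D. (fst c, Suc (snd c)) \<notin> D \<and> (Suc (fst c), snd c) \<notin> D}"

lemma finite_syt:
  assumes "finite D"
  shows "finite (syt D)"
proof (rule finite_subset)
  show "syt D \<subseteq> (\<lambda>f c. if c \<in> D then f c else 0) ` PiE D (\<lambda>_. {..card D})"
  proof
    fix T assume T: "T \<in> syt D"
    then have "T = (\<lambda>c. if c \<in> D then restrict T D c else 0)"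
      by (intro ext) (auto simp: syt_def)
    moreover have "restrict T D \<in> PiE D (\<lambda>_. {..card D})"
      using T by (auto simp: syt_def bij_betw_def)
    ultimately show "T \<in> (\<lambda>f c. if c \<in> D then f c else 0) ` PiE D (\<lambda>_. {..card D})"
      by blast
  qed
qed (use assms in \<open>auto intro: finite_PiE\<close>)

lemma syt_range: "T \<in> syt D \<Longrightarrow> c \<in> D \<Longrightarrow> T c \<in> {1..card D}"
  by (auto simp: syt_def bij_betw_def)

lemma syt_outside: "T \<in> syt D \<Longrightarrow> c \<notin> D \<Longrightarrow> T c = 0"
  unfolding syt_def by blast

lemma syt_max_in_corners:
  assumes T: "T \<in> syt D" and c: "c \<in> D" "T c = card D"
  shows "c \<in> corners D"
proof -
  obtain i j where cij: "c = (i, j)"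
    by (cases c)
  have "(i, Suc j) \<notin> D"
  proof
    assume right: "(i, Suc j) \<in> D"
    with T have "T (i, j) < T (i, Suc j)"
      by (simp add: syt_def)
    with syt_range[OF T right] c cij show False
      by simp
  qed
  moreover have "(Suc i, j) \<notin> D"
  proof
    assume below: "(Suc i, j) \<in> D"
    with T have "T (i, j) < T (Suc i, j)"
      by (simp add: syt_def)
    with syt_range[OF T below] c cij show False
      by simp
  qed
  ultimately show ?thesis
    using c cij by (simp add: corners_def)
qed

lemma syt_remove_max:
  assumes T: "T \<in> syt D" and fin: "finite D" and c: "c \<in> D" "T c = card D"
  shows "T(c := 0) \<in> syt (D - {c})"
proof -
  have n: "card (D - {c}) = card D - 1" "1 \<le> card D"
    using fin c by (auto simp: Suc_le_eq card_gt_0_iff)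
  have "bij_betw T D {1..card D}"
    using T by (simp add: syt_def)
  then have "bij_betw T (D - {c}) ({1..card D} - {card D})"
    by (rule bij_betw_DiffI) (use c n in auto)
  moreover have "{1..card D} - {card D} = {1..card (D - {c})}"
    using n by auto
  ultimately have "bij_betw T (D - {c}) {1..card (D - {c})}"
    by simp
  then have "bij_betw (T(c := 0)) (D - {c}) {1..card (D - {c})}"
    by (rule bij_betw_cong[THEN iffD1, rotated]) auto
  moreover have "(T(c := 0)) x = 0" if "x \<notin> D - {c}" for x
    using that syt_outside[OF T] by (cases "x = c") simp_all
  moreover have "(T(c := 0)) (i, j) < (T(c := 0)) (i, Suc j)" if "(i, Suc j) \<in> D - {c}" for i j
    using that T syt_range[OF T, of "(i, Suc j)"] by (auto simp: syt_def)
  moreover have "(T(c := 0)) (i, j) < (T(c := 0)) (Suc i, j)" if "(Suc i, j) \<in> D - {c}" for i j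
    using that T syt_range[OF T, of "(Suc i, j)"] by (auto simp: syt_def)
  ultimately show ?thesis
    by (simp add: syt_def)
qed

lemma syt_insert_corner:
  assumes fin: "finite D" and c: "c \<in> corners D" and T: "T \<in> syt (D - {c})"
  shows "T(c := card D) \<in> syt D"
proof -
  define n where "n = card D"
  have cD: "c \<in> D"
    using c by (simp add: corners_def)
  have n: "card (D - {c}) = n - 1" "1 \<le> n"
    using fin cD by (auto simp: n_def Suc_le_eq card_gt_0_iff)
  have small: "T x < n" for x
  proof (cases "x \<in> D - {c}")
    case True
    then show ?thesis
      using syt_range[OF T True] n by auto
  next
    case False
    then show ?thesis
      using syt_outside[OF T False] n by simp
  qed
  have "bij_betw T (D - {c}) {1..n - 1}"
    using T n by (simp add: syt_def)
  then have "bij_betw (T(c := n)) (D - {c}) {1..n - 1}"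
    by (rule bij_betw_cong[THEN iffD1, rotated]) auto
  then have "bij_betw (T(c := n)) ((D - {c}) \<union> {c}) ({1..n - 1} \<union> {n})"
    by (rule bij_betw_combine) (use n in auto)
  moreover have "(D - {c}) \<union> {c} = D" "{1..n - 1} \<union> {n} = {1..n}"
    using cD n by auto
  ultimately have bij: "bij_betw (T(c := n)) D {1..n}"
    by simp
  have row: "(T(c := n)) (i, j) < (T(c := n)) (i, Suc j)" if "(i, Suc j) \<in> D" for i j
  proof (cases "(i, Suc j) = c")
    case True
    then show ?thesis
      using small[of "(i, j)"] by auto
  next
    case False
    moreover have "(i, j) \<noteq> c"
      using that c by (auto simp: corners_def)
    ultimately show ?thesis
      using T that by (auto simp: syt_def)
  qed
  have column: "(T(c := n)) (i, j) < (T(c := n)) (Suc i, j)" if "(Suc i, j) \<in> D" for i j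
  proof (cases "(Suc i, j) = c")
    case True
    then show ?thesis
      using small[of "(i, j)"] by auto
  next
    case False
    moreover have "(i, j) \<noteq> c"
      using that c by (auto simp: corners_def)
    ultimately show ?thesis
      using T that by (auto simp: syt_def)
  qed
  show ?thesis
    using bij row column syt_outside[OF T] cD by (auto simp: syt_def n_def)
qed

lemma card_syt_max_at_corner:
  assumes fin: "finite D" and c: "c \<in> corners D"
  shows "card {T \<in> syt D. T c = card D} = card (syt (D - {c}))"
proof -
  have cD: "c \<in> D"
    using c by (simp add: corners_def)
  have "bij_betw (\<lambda>T. T(c := 0)) {T \<in> syt D. T c = card D} (syt (D - {c}))"
  proof (rule bij_betw_byWitness[where f' = "\<lambda>T. T(c := card D)"])
    show "\<forall>T\<in>{T \<in> syt D. T c = card D}. T(c := 0, c := card D) = T"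
      by auto
    show "\<forall>T\<in>syt (D - {c}). T(c := card D, c := 0) = T"
      using syt_outside by fastforce
    show "(\<lambda>T. T(c := 0)) ` {T \<in> syt D. T c = card D} \<subseteq> syt (D - {c})"
      using fin cD by (auto intro: syt_remove_max)
    show "(\<lambda>T. T(c := card D)) ` syt (D - {c}) \<subseteq> {T \<in> syt D. T c = card D}"
      using syt_insert_corner[OF fin c] by auto
  qed
  then show ?thesis
    by (rule bij_betw_same_card)
qed

lemma card_syt_branching:
  assumes fin: "finite D" and ne: "D \<noteq> {}"
  shows "card (syt D) = (\<Sum>c\<in>corners D. card (syt (D - {c})))"
proof -
  define M where "M c = {T \<in> syt D. T c = card D}" for c
  have "syt D \<subseteq> (\<Union>c\<in>corners D. M c)"
  proof
    fix T assume T: "T \<in> syt D"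
    then have "T ` D = {1..card D}" "1 \<le> card D"
      using fin ne by (auto simp: syt_def bij_betw_def Suc_le_eq card_gt_0_iff)
    then obtain c where c: "c \<in> D" "T c = card D"
      by (metis atLeastAtMost_iff imageE order.refl)
    then have "c \<in> corners D"
      by (rule syt_max_in_corners[OF T])
    with T c show "T \<in> (\<Union>c\<in>corners D. M c)"
      by (auto simp: M_def)
  qed
  then have "syt D = (\<Union>c\<in>corners D. M c)"
    by (auto simp: M_def)
  then have "card (syt D) = card (\<Union>c\<in>corners D. M c)"
    by simp
  also have "\<dots> = (\<Sum>c\<in>corners D. card (M c))"
  proof (rule card_UN_disjoint)
    show "finite (corners D)"
      using fin by (simp add: corners_def)
    show "\<forall>c\<in>corners D. finite (M c)"
      using finite_syt[OF fin] by (simp add: M_def)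
    have "c = c'" if "T \<in> M c" "T \<in> M c'" "c \<in> corners D" "c' \<in> corners D" for T c c'
    proof -
      have "inj_on T D" "c \<in> D" "c' \<in> D" "T c = T c'"
        using that by (auto simp: M_def corners_def syt_def bij_betw_def)
      then show ?thesis
        by (auto dest: inj_onD)
    qed
    then show "\<forall>c\<in>corners D. \<forall>c'\<in>corners D. c \<noteq> c' \<longrightarrow> M c \<inter> M c' = {}"
      by blast
  qed
  also have "\<dots> = (\<Sum>c\<in>corners D. card (syt (D - {c})))"
    using fin by (intro sum.cong) (simp_all add: M_def card_syt_max_at_corner)
  finally show ?thesis .
qed

section \<open>Removing and adding a cell of a partition\<close>

lemma is_partition_nth:
  "is_partition n lam \<longleftrightarrow>
    (\<forall>i j. i < j \<longrightarrow> j < length lam \<longrightarrow> lam ! j \<le> lam ! i)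
    \<and> (\<forall>i<length lam. 0 < lam ! i) \<and> sum_list lam = n"
  by (auto simp: is_partition_def sorted_wrt_iff_nth_less in_set_conv_nth)

lemma partition_nth_antimono:
  "is_partition n lam \<Longrightarrow> i \<le> j \<Longrightarrow> j < length lam \<Longrightarrow> lam ! j \<le> lam ! i"
  by (cases "i = j") (auto simp: is_partition_nth)

lemma partition_nth_pos: "is_partition n lam \<Longrightarrow> i < length lam \<Longrightarrow> 0 < lam ! i"
  by (simp add: is_partition_nth)

definition removable_rows :: "nat list \<Rightarrow> nat set" where
  "removable_rows lam = {i. i < length lam \<and> (Suc i = length lam \<or> lam ! Suc i < lam ! i)}"

definition run_starts :: "'a list \<Rightarrow> nat set" where
  "run_starts xs = {i. i < length xs \<and> (i = 0 \<or> xs ! i \<noteq> xs ! (i - 1))}"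

definition addable_rows :: "nat \<Rightarrow> nat list \<Rightarrow> nat set" where
  "addable_rows k mu = run_starts mu \<union> (if length mu < k then {length mu} else {})"

definition add_cell :: "nat list \<Rightarrow> nat \<Rightarrow> nat list" where
  "add_cell mu i = (if i < length mu then mu[i := Suc (mu ! i)] else mu @ [1])"

text \<open>A removable row of length 1 is the last row, so \<open>butlast\<close> deletes exactly that row.\<close>

definition remove_cell :: "nat list \<Rightarrow> nat \<Rightarrow> nat list" where
  "remove_cell lam i = (if lam ! i = 1 then butlast lam else lam[i := lam ! i - 1])"

lemma removable_row_one_is_last:
  assumes p: "is_partition n lam" and i: "i \<in> removable_rows lam" "lam ! i = 1"
  shows "Suc i = length lam"
proof (rule ccontr)
  assume "Suc i \<noteq> length lam"
  with i have "lam ! Suc i < 1" "Suc i < length lam"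
    by (auto simp: removable_rows_def)
  with partition_nth_pos[OF p] show False
    by fastforce
qed

lemma is_partition_append_one: "is_partition n mu \<Longrightarrow> is_partition (Suc n) (mu @ [1])"
  by (auto simp: is_partition_def sorted_wrt_append Suc_le_eq)

lemma is_partition_butlast:
  assumes p: "is_partition (Suc n) lam" and last: "last lam = 1"
  shows "is_partition n (butlast lam)"
proof -
  have "lam \<noteq> []"
    using p by (auto simp: is_partition_def)
  with last have "lam = butlast lam @ [1]"
    by (metis append_butlast_last_id)
  with p have "is_partition (Suc n) (butlast lam @ [1])"
    by simp
  then show ?thesis
    by (simp add: is_partition_def sorted_wrt_append)
qed

lemma is_partition_increase_row:
  assumes p: "is_partition n mu" and i: "i \<in> run_starts mu"
  shows "is_partition (Suc n) (mu[i := Suc (mu ! i)])"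
proof -
  have il: "i < length mu"
    using i by (simp add: run_starts_def)
  have "mu[i := Suc (mu ! i)] ! b \<le> mu[i := Suc (mu ! i)] ! a"
    if ab: "a < b" "b < length mu" for a b
  proof (cases "b = i")
    case True
    then have "mu ! i < mu ! (i - 1)"
      using i ab partition_nth_antimono[OF p, of "i - 1" i] by (auto simp: run_starts_def)
    moreover have "mu ! (i - 1) \<le> mu ! a"
      using True ab partition_nth_antimono[OF p, of a "i - 1"] by simp
    ultimately show ?thesis
      using True ab by simp
  next
    case False
    then show ?thesis
      using ab partition_nth_antimono[OF p, of a b] by (cases "a = i") auto
  qed
  then show ?thesis
    using p il by (auto simp: is_partition_nth nth_list_update sum_list_update)
qed

lemma is_partition_decrease_row:
  assumes p: "is_partition (Suc n) lam" and i: "i \<in> removable_rows lam" "1 < lam ! i"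
  shows "is_partition n (lam[i := lam ! i - 1])"
proof -
  have il: "i < length lam"
    using i by (simp add: removable_rows_def)
  have "lam[i := lam ! i - 1] ! b \<le> lam[i := lam ! i - 1] ! a"
    if ab: "a < b" "b < length lam" for a b
  proof (cases "a = i")
    case True
    then have "lam ! Suc i < lam ! i"
      using i ab by (auto simp: removable_rows_def)
    moreover have "lam ! b \<le> lam ! Suc i"
      using True ab partition_nth_antimono[OF p, of "Suc i" b] by simp
    ultimately show ?thesis
      using True ab by simp
  next
    case False
    then show ?thesis
      using ab partition_nth_antimono[OF p, of a b] by (cases "b = i") auto
  qed
  then show ?thesis
    using p il i by (auto simp: is_partition_nth nth_list_update sum_list_update)
qed

lemma add_cell_partition:
  assumes p: "is_partition n mu" and k: "length mu \<le> k" and i: "i \<in> addable_rows k mu"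
  shows "is_partition (Suc n) (add_cell mu i) \<and> length (add_cell mu i) \<le> k
    \<and> i \<in> removable_rows (add_cell mu i)"
proof (cases "i < length mu")
  case True
  then have "i \<in> run_starts mu"
    using i by (auto simp: addable_rows_def split: if_splits)
  moreover have "i \<in> removable_rows (mu[i := Suc (mu ! i)])"
    using True partition_nth_antimono[OF p, of i "Suc i"]
    by (cases "Suc i < length mu") (auto simp: removable_rows_def)
  ultimately show ?thesis
    using True k is_partition_increase_row[OF p] by (simp add: add_cell_def)
next
  case False
  then have "i = length mu" "length mu < k"
    using i by (auto simp: addable_rows_def run_starts_def split: if_splits)
  then show ?thesis
    using is_partition_append_one[OF p] by (simp add: add_cell_def removable_rows_def)
qed

lemma remove_cell_partition:
  assumes p: "is_partition (Suc n) lam" and k: "length lam \<le> k" and i: "i \<in> removable_rows lam"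
  shows "is_partition n (remove_cell lam i) \<and> length (remove_cell lam i) \<le> k
    \<and> i \<in> addable_rows k (remove_cell lam i)"
proof (cases "lam ! i = 1")
  case True
  then have last: "Suc i = length lam"
    using removable_row_one_is_last[OF p i] by simp
  then have "last lam = 1"
    using True by (metis diff_Suc_1 last_conv_nth list.size(3) nat.distinct(1))
  moreover have "length (butlast lam) = i" "i < k"
    using last k by simp_all
  ultimately show ?thesis
    using True is_partition_butlast[OF p] by (simp add: remove_cell_def addable_rows_def)
next
  case False
  have il: "i < length lam"
    using i by (simp add: removable_rows_def)
  then have "1 < lam ! i"
    using False partition_nth_pos[OF p] by (metis less_one nat_neq_iff)
  moreover have "lam ! i \<le> lam ! (i - 1)"
    using partition_nth_antimono[OF p, of "i - 1" i] il by simp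
  ultimately have "i \<in> run_starts (lam[i := lam ! i - 1])"
    using il by (auto simp: run_starts_def nth_list_update)
  then show ?thesis
    using False k is_partition_decrease_row[OF p i] \<open>1 < lam ! i\<close>
    by (simp add: remove_cell_def addable_rows_def)
qed

lemma remove_add_cell:
  assumes p: "is_partition n mu" and i: "i \<in> addable_rows k mu"
  shows "remove_cell (add_cell mu i) i = mu"
proof (cases "i < length mu")
  case True
  then show ?thesis
    using partition_nth_pos[OF p True] by (simp add: add_cell_def remove_cell_def)
next
  case False
  then have "i = length mu"
    using i by (auto simp: addable_rows_def run_starts_def split: if_splits)
  then show ?thesis
    by (simp add: add_cell_def remove_cell_def)
qed

lemma add_remove_cell:
  assumes p: "is_partition n lam" and i: "i \<in> removable_rows lam"
  shows "add_cell (remove_cell lam i) i = lam"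
proof (cases "lam ! i = 1")
  case True
  then have last: "Suc i = length lam"
    using removable_row_one_is_last[OF p i] by simp
  then have "butlast lam @ [1] = lam"
    using True by (metis append_butlast_last_id diff_Suc_1 last_conv_nth list.size(3)
        nat.distinct(1))
  moreover have "length (butlast lam) = i"
    using last by simp
  ultimately show ?thesis
    using True by (simp add: add_cell_def remove_cell_def)
next
  case False
  then show ?thesis
    using i partition_nth_pos[OF p, of i]
    by (simp add: add_cell_def remove_cell_def removable_rows_def)
qed

lemma card_run_starts:
  fixes xs :: "'a::linorder list"
  assumes sorted: "sorted_wrt (\<ge>) xs"
  shows "card (run_starts xs) = card (set xs)"
proof -
  have mono: "xs ! j \<le> xs ! i" if "i \<le> j" "j < length xs" for i j
    using sorted_wrt_nth_less[OF sorted, of i j] that by (cases "i = j") auto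
  have distinct_values: "xs ! i \<noteq> xs ! j"
    if "i < j" "i \<in> run_starts xs" "j \<in> run_starts xs" for i j
  proof -
    have j: "j \<noteq> 0" "j < length xs" "xs ! j \<noteq> xs ! (j - 1)"
      using that by (auto simp: run_starts_def)
    then have "xs ! j < xs ! (j - 1)"
      using mono[of "j - 1" j] by simp
    moreover have "xs ! (j - 1) \<le> xs ! i"
      using that j mono[of i "j - 1"] by simp
    ultimately show ?thesis
      by simp
  qed
  have "inj_on (nth xs) (run_starts xs)"
    by (rule inj_onI) (metis distinct_values linorder_neq_iff)
  moreover have "set xs \<subseteq> nth xs ` run_starts xs"
  proof
    fix v assume "v \<in> set xs"
    then have ex: "\<exists>j. j < length xs \<and> xs ! j = v"
      by (simp add: in_set_conv_nth)
    define i where "i = (LEAST j. j < length xs \<and> xs ! j = v)"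
    have i: "i < length xs" "xs ! i = v"
      using LeastI_ex[OF ex] by (simp_all add: i_def)
    have "xs ! (i - 1) \<noteq> v" if "i \<noteq> 0"
      using not_less_Least[of "i - 1" "\<lambda>j. j < length xs \<and> xs ! j = v"] that i
      by (simp add: i_def)
    then have "i \<in> run_starts xs"
      using i by (auto simp: run_starts_def)
    with i show "v \<in> nth xs ` run_starts xs"
      by force
  qed
  moreover have "nth xs ` run_starts xs \<subseteq> set xs"
    by (auto simp: run_starts_def)
  ultimately show ?thesis
    by (metis card_image subset_antisym)
qed

lemma card_addable_rows:
  assumes "is_partition n mu"
  shows "card (addable_rows k mu) = d_parts mu + (if length mu < k then 1 else 0)"
proof -
  have "card (run_starts mu) = d_parts mu"
    using assms card_run_starts[of mu] by (simp add: is_partition_def d_parts_def)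
  moreover have "finite (run_starts mu)" "length mu \<notin> run_starts mu"
    by (simp_all add: run_starts_def)
  ultimately show ?thesis
    by (simp add: addable_rows_def)
qed

section \<open>The branching rule for Young diagrams\<close>

lemma cells_Sigma: "cells lam = Sigma {..<length lam} (\<lambda>i. {..<lam ! i})"
  by (auto simp: cells_def)

lemma finite_cells: "finite (cells lam)"
  by (simp add: cells_Sigma)

lemma card_cells: "card (cells lam) = sum_list lam"
  by (simp add: cells_Sigma sum_list_sum_nth lessThan_atLeast0)

lemma SYT_eq_syt: "SYT lam = syt (cells lam)"
  by (simp add: SYT_def syt_def card_cells)

lemma corners_cells:
  assumes p: "is_partition n lam"
  shows "corners (cells lam) = (\<lambda>i. (i, lam ! i - 1)) ` removable_rows lam"
proof (intro set_eqI iffI)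
  fix c assume "c \<in> corners (cells lam)"
  then obtain i j where c: "c = (i, j)" and ij: "i < length lam" "j < lam ! i"
    and right: "\<not> Suc j < lam ! i" and below: "\<not> (Suc i < length lam \<and> j < lam ! Suc i)"
    by (cases c) (auto simp: corners_def cells_def)
  then have "j = lam ! i - 1" "i \<in> removable_rows lam"
    by (auto simp: removable_rows_def)
  with c show "c \<in> (\<lambda>i. (i, lam ! i - 1)) ` removable_rows lam"
    by blast
next
  fix c assume "c \<in> (\<lambda>i. (i, lam ! i - 1)) ` removable_rows lam"
  then obtain i where c: "c = (i, lam ! i - 1)" and i: "i \<in> removable_rows lam"
    by blast
  then have "i < length lam"
    by (simp add: removable_rows_def)
  with partition_nth_pos[OF p] c i show "c \<in> corners (cells lam)"
    by (auto simp: corners_def cells_def removable_rows_def)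
qed

lemma cells_remove_cell:
  assumes p: "is_partition n lam" and i: "i \<in> removable_rows lam"
  shows "cells (remove_cell lam i) = cells lam - {(i, lam ! i - 1)}"
proof (cases "lam ! i = 1")
  case True
  then have "Suc i = length lam"
    using removable_row_one_is_last[OF p i] by simp
  then have "(a, b) \<in> cells (butlast lam) \<longleftrightarrow> (a, b) \<in> cells lam - {(i, 0)}" for a b
    using True by (cases "a = i") (auto simp: cells_def nth_butlast)
  with True show ?thesis
    by (simp add: remove_cell_def set_eq_iff)
next
  case False
  then show ?thesis
    using i by (auto simp: remove_cell_def cells_def nth_list_update removable_rows_def
        split: if_splits)
qed

lemma f_syt_branching:
  assumes p: "is_partition (Suc n) lam"
  shows "f_syt lam = (\<Sum>i\<in>removable_rows lam. f_syt (remove_cell lam i))"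
proof -
  have "cells lam \<noteq> {}"
    using p card_cells[of lam] by (auto simp: is_partition_def)
  then have "f_syt lam = (\<Sum>c\<in>corners (cells lam). card (syt (cells lam - {c})))"
    by (simp add: f_syt_def SYT_eq_syt card_syt_branching finite_cells)
  also have "\<dots> = (\<Sum>i\<in>removable_rows lam. card (syt (cells lam - {(i, lam ! i - 1)})))"
    unfolding corners_cells[OF p] by (subst sum.reindex) (auto simp: inj_on_def)
  also have "\<dots> = (\<Sum>i\<in>removable_rows lam. f_syt (remove_cell lam i))"
    using cells_remove_cell[OF p] by (simp add: f_syt_def SYT_eq_syt)
  finally show ?thesis .
qed

section \<open>Summing the branching rule\<close>

lemma finite_partitions: "finite {lam. is_partition n lam}"
proof (rule finite_subset)
  have "length xs \<le> sum_list xs" if "\<forall>x\<in>set xs. 0 < x" for xs :: "nat list"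
    using that by (induction xs) auto
  then show "{lam. is_partition n lam} \<subseteq> {xs. set xs \<subseteq> {..n} \<and> length xs \<le> n}"
    using member_le_sum_list by (fastforce simp: is_partition_def)
  show "finite {xs. set xs \<subseteq> {..n} \<and> length xs \<le> n}"
    by (rule finite_lists_length_le) simp
qed

definition bounded_partitions :: "nat \<Rightarrow> nat \<Rightarrow> nat list set" where
  "bounded_partitions k n = {lam. is_partition n lam \<and> length lam \<le> k}"

lemma finite_bounded_partitions: "finite (bounded_partitions k n)"
  by (rule finite_subset[OF _ finite_partitions]) (auto simp: bounded_partitions_def)

lemma bij_betw_remove_cell:
  "bij_betw (\<lambda>(lam, i). (remove_cell lam i, i))
    (SIGMA lam:bounded_partitions k (Suc n). removable_rows lam)
    (SIGMA mu:bounded_partitions k n. addable_rows k mu)"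
proof (rule bij_betw_byWitness[where f' = "\<lambda>(mu, i). (add_cell mu i, i)"])
  show "\<forall>x\<in>SIGMA lam:bounded_partitions k (Suc n). removable_rows lam.
      (\<lambda>(mu, i). (add_cell mu i, i)) ((\<lambda>(lam, i). (remove_cell lam i, i)) x) = x"
    using add_remove_cell by (auto simp: bounded_partitions_def)
  show "\<forall>x\<in>SIGMA mu:bounded_partitions k n. addable_rows k mu.
      (\<lambda>(lam, i). (remove_cell lam i, i)) ((\<lambda>(mu, i). (add_cell mu i, i)) x) = x"
    using remove_add_cell by (auto simp: bounded_partitions_def)
  show "(\<lambda>(lam, i). (remove_cell lam i, i)) ` (SIGMA lam:bounded_partitions k (Suc n). removable_rows lam)
      \<subseteq> (SIGMA mu:bounded_partitions k n. addable_rows k mu)"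
    using remove_cell_partition by (auto simp: bounded_partitions_def)
  show "(\<lambda>(mu, i). (add_cell mu i, i)) ` (SIGMA mu:bounded_partitions k n. addable_rows k mu)
      \<subseteq> (SIGMA lam:bounded_partitions k (Suc n). removable_rows lam)"
    using add_cell_partition by (auto simp: bounded_partitions_def)
qed

lemma tau_Suc:
  assumes k: "1 \<le> k"
  shows "tau k (Suc m) = sigma k m + tau (k - 1) m"
proof -
  let ?B = "bounded_partitions k"
  have fin_rows: "finite (removable_rows lam)" "finite (addable_rows k lam)" for lam
    by (simp_all add: removable_rows_def addable_rows_def run_starts_def)
  have "tau k (Suc m) = (\<Sum>lam\<in>?B (Suc m). \<Sum>i\<in>removable_rows lam. f_syt (remove_cell lam i))"
    unfolding tau_def bounded_partitions_def[symmetric]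
    by (rule sum.cong) (auto simp: bounded_partitions_def intro: f_syt_branching)
  also have "\<dots> = (\<Sum>(lam, i)\<in>(SIGMA lam:?B (Suc m). removable_rows lam). f_syt (remove_cell lam i))"
    by (rule sum.Sigma) (simp_all add: finite_bounded_partitions fin_rows)
  also have "\<dots> = (\<Sum>(mu, i)\<in>(SIGMA mu:?B m. addable_rows k mu). f_syt mu)"
    using sum.reindex_bij_betw[OF bij_betw_remove_cell, of "\<lambda>(mu, i). f_syt mu"]
    by (simp add: case_prod_unfold)
  also have "\<dots> = (\<Sum>mu\<in>?B m. card (addable_rows k mu) * f_syt mu)"
    by (subst sum.Sigma[symmetric]) (simp_all add: finite_bounded_partitions fin_rows)
  also have "\<dots> = (\<Sum>mu\<in>?B m. d_parts mu * f_syt mu + (if length mu < k then f_syt mu else 0))"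
    by (rule sum.cong) (auto simp: bounded_partitions_def card_addable_rows)
  also have "\<dots> = sigma k m + (\<Sum>mu\<in>?B m. if length mu < k then f_syt mu else 0)"
    by (simp add: sum.distrib sigma_def bounded_partitions_def)
  also have "(\<Sum>mu\<in>?B m. if length mu < k then f_syt mu else 0) = tau (k - 1) m"
    unfolding tau_def sum.inter_filter[OF finite_bounded_partitions, symmetric]
    using k by (intro sum.cong) (auto simp: bounded_partitions_def)
  finally show ?thesis .
qed

theorem mainTheorem8:
  fixes m k :: nat
  assumes "1 \<le> m" and "1 \<le> k"
  shows "int (sigma k m) = int (tau k (m + 1)) - int (tau (k - 1) m)"
  using tau_Suc[OF assms(2), of m] by simp

end
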